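(* Let $\mathcal A$ be a linearly ordered $\mathbf{UL}_\omega$-algebra. Let $B\subseteq A$ be finite with $\{e,f,\bot,\top\}\subseteq B$, and let $D$ be as described in the context. Then $D$ is finite.
   Context: A $\mathbf{UL}$-algebra is a structure $\langle A,\wedge,\vee,\cdot,\to,e,f,\bot,\top\rangle$ such that: - it is a bounded lattice; - $\langle A,\cdot,e\rangle$ is a commutative monoid; - $xy\le z$ iff $y\le x\to z$; - for all $x,y,u,v$: $\lambda_u((x\vee y)\to x)\vee\lambda_v((x\vee y)\to y)=e$, where $\lambda_a(b)=(a\to ba)\wedge e$. A $\mathbf{UL}_\omega$-algebra additionally satisfies $x\to e=x^2\to e$ for all $x$. This class includes $\mathbf{IUL}_\omega$-algebras. Construction. $M$ is the submonoid of $\langle A,\cdot,e\rangle$ generated by $B$. For $a\in M$ and $b\in B$, put $(a\mapsto b]=\{c\in M:ac\le b\}$. Let $\bar D=\{(a\mapsto b]:a\in M,b\in B\}$ and $D=\{\bigcap\chi:\chi\subseteq\bar D\}$, with the empty intersection equal to $M$. *)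

theory Defs
  imports Main
begin

text \<open>An algebra A = (A, inf, sup, mult, imp, e, f, bot, top): the bounded-lattice reduct is the
  type class structure of the carrier type 'a (carrier = UNIV); the lattice order is the
  class order.\<close>

definition lam :: "('a \<Rightarrow> 'a \<Rightarrow> 'a) \<Rightarrow> ('a \<Rightarrow> 'a \<Rightarrow> 'a) \<Rightarrow> 'a::lattice \<Rightarrow> 'a \<Rightarrow> 'a \<Rightarrow> 'a" where
  "lam mult imp e a b = inf (imp a (mult b a)) e"

definition UL_algebra ::
  "('a::bounded_lattice \<Rightarrow> 'a \<Rightarrow> 'a) \<Rightarrow> ('a \<Rightarrow> 'a \<Rightarrow> 'a) \<Rightarrow> 'a \<Rightarrow> 'a \<Rightarrow> bool" where
  "UL_algebra mult imp e f \<longleftrightarrow>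
     (\<forall>x y z. mult (mult x y) z = mult x (mult y z)) \<and>
     (\<forall>x y. mult x y = mult y x) \<and>
     (\<forall>x. mult e x = x) \<and>
     (\<forall>x y z. mult x y \<le> z \<longleftrightarrow> y \<le> imp x z) \<and>
     (\<forall>x y u v. sup (lam mult imp e u (imp (sup x y) x)) (lam mult imp e v (imp (sup x y) y)) = e)"

definition UL_omega_algebra ::
  "('a::bounded_lattice \<Rightarrow> 'a \<Rightarrow> 'a) \<Rightarrow> ('a \<Rightarrow> 'a \<Rightarrow> 'a) \<Rightarrow> 'a \<Rightarrow> 'a \<Rightarrow> bool" where
  "UL_omega_algebra mult imp e f \<longleftrightarrow>
     UL_algebra mult imp e f \<and> (\<forall>x. imp x e = imp (mult x x) e)"

inductive_set gen_monoid :: "('a \<Rightarrow> 'a \<Rightarrow> 'a) \<Rightarrow> 'a \<Rightarrow> 'a set \<Rightarrow> 'a set"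
  for mult e B where
    unit: "e \<in> gen_monoid mult e B"
  | gen: "b \<in> B \<Longrightarrow> b \<in> gen_monoid mult e B"
  | mult: "a \<in> gen_monoid mult e B \<Longrightarrow> c \<in> gen_monoid mult e B \<Longrightarrow> mult a c \<in> gen_monoid mult e B"

definition res_set :: "('a::order \<Rightarrow> 'a \<Rightarrow> 'a) \<Rightarrow> 'a \<Rightarrow> 'a set \<Rightarrow> 'a \<Rightarrow> 'a \<Rightarrow> 'a set" where
  "res_set mult e B a b = {c \<in> gen_monoid mult e B. mult a c \<le> b}"

definition Dbar :: "('a::order \<Rightarrow> 'a \<Rightarrow> 'a) \<Rightarrow> 'a \<Rightarrow> 'a set \<Rightarrow> 'a set set" where
  "Dbar mult e B = {res_set mult e B a b | a b. a \<in> gen_monoid mult e B \<and> b \<in> B}"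

text \<open>D = intersections of subfamilies of Dbar, empty intersection being M
  (intersecting with M realises this convention; all members of Dbar are subsets of M).\<close>
definition Dset :: "('a::order \<Rightarrow> 'a \<Rightarrow> 'a) \<Rightarrow> 'a \<Rightarrow> 'a set \<Rightarrow> 'a set set" where
  "Dset mult e B = {gen_monoid mult e B \<inter> \<Inter>\<chi> | \<chi>. \<chi> \<subseteq> Dbar mult e B}"

end

theory Submission
  imports Defs "HOL-Library.Multiset" "HOL-Library.Ramsey"
begin

text \<open>Since \<open>D\<close> consists of intersections of members of \<open>Dbar\<close>, it suffices that for
  each \<open>b\<close> only finitely many sets \<open>(a \<mapsto> b]\<close> occur. By linearity these sets form a chain, so
  infinitely many of them would give, via Ramsey's theorem, a strictly monotone sequence
  \<open>(a\<^sub>i \<mapsto> b]\<close> and elements \<open>d\<^sub>i\<close> with \<open>a\<^sub>j d\<^sub>i \<le> b\<close> iff \<open>i < j\<close> (or iff \<open>j \<le> i\<close>).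
  Write \<open>a\<^sub>i\<close>, \<open>d\<^sub>i\<close> as products of multisets over \<open>B\<close>; by Ramsey's theorem again we may
  assume these multisets grow with a fixed support of the increments. The condition
  \<open>x \<rightarrow> e = x\<^sup>2 \<rightarrow> e\<close> says that whether a product lies below \<open>e\<close> depends only on the support of
  its factors. Hence all the increments \<open>\<rho>\<close> are on the same side of \<open>e\<close>: if one of them pushes
  a product from below \<open>b\<close> to above \<open>b\<close>, then \<open>e \<le> \<rho>\<close> for all of them, so none can push a
  product from above \<open>b\<close> to below it. Both kinds of transition occur in the pattern above.\<close>

lemma ramsey_pairs_subseq:
  fixes g :: "nat \<Rightarrow> nat \<Rightarrow> 'c"
  assumes C: "finite C" and gC: "\<And>i j. i < j \<Longrightarrow> g i j \<in> C"
  obtains r :: "nat \<Rightarrow> nat" and c where "strict_mono r" "\<And>i j. i < j \<Longrightarrow> g (r i) (r j) = c"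
proof -
  obtain h :: "'c \<Rightarrow> nat" and n :: nat where hn: "h ` C = {i. i < n}" "inj_on h C"
    using finite_imp_inj_to_nat_seg[OF C] by blast
  define f where "f X = h (g (Min X) (Max X))" for X :: "nat set"
  have colour_bound: "\<forall>x\<in>(UNIV::nat set). \<forall>y\<in>UNIV. x \<noteq> y \<longrightarrow> f {x, y} < n"
  proof (intro ballI impI)
    fix x y :: nat assume "x \<noteq> y"
    then have "min x y < max x y" by auto
    then have "g (min x y) (max x y) \<in> C" by (rule gC)
    then have "h (g (min x y) (max x y)) < n" using hn by auto
    then show "f {x, y} < n" by (simp add: f_def)
  qed
  obtain Y t where Y: "infinite Y" "\<forall>x\<in>Y. \<forall>y\<in>Y. x \<noteq> y \<longrightarrow> f {x, y} = t"
    using Ramsey2[OF infinite_UNIV_nat colour_bound] by blast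
  define r where "r = enumerate Y"
  have r_mono: "strict_mono r" using Y(1) by (simp add: r_def strict_mono_enumerate)
  have r_in: "r i \<in> Y" for i using Y(1) by (simp add: r_def enumerate_in_set)
  have h_const: "h (g (r i) (r j)) = t" if "i < j" for i j
  proof -
    have lt: "r i < r j" using r_mono that by (simp add: strict_mono_less)
    then have "f {r i, r j} = h (g (r i) (r j))" by (simp add: f_def min_def max_def)
    moreover have "f {r i, r j} = t" using Y(2) r_in lt by auto
    ultimately show ?thesis by simp
  qed
  have "g (r i) (r j) = g (r 0) (r 1)" if "i < j" for i j
  proof -
    have "r i < r j" "r 0 < r 1" using r_mono that by (auto simp: strict_mono_less)
    then have "g (r i) (r j) \<in> C" "g (r 0) (r 1) \<in> C" using gC by auto
    moreover have "h (g (r i) (r j)) = h (g (r 0) (r 1))" using h_const[OF that] h_const[of 0 1] by simp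
    ultimately show ?thesis using hn(2) by (meson inj_onD)
  qed
  then show ?thesis using that r_mono by blast
qed

lemma no_strictly_decreasing_nat_seq:
  fixes f :: "nat \<Rightarrow> nat"
  assumes "\<And>i j. i < j \<Longrightarrow> f j < f i"
  shows False
proof -
  obtain k where "(f (Suc k), f k) \<notin> {(x, y). x < y}"
    by (rule wf_no_infinite_down_chainE[OF wf_less])
  with assms[of k "Suc k"] show False by simp
qed

lemma strict_chain_separating_seq:
  fixes F :: "nat \<Rightarrow> 'b set"
  assumes F: "\<And>i j. i < j \<Longrightarrow> F i \<subset> F j"
  obtains d where "\<And>i. d i \<in> F (Suc i) - F i" "\<And>i j. d i \<in> F j \<longleftrightarrow> i < j"
proof -
  have mono: "F i \<subseteq> F j" if "i \<le> j" for i j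
    using F[of i j] that by (cases "i = j") auto
  have "\<forall>i. \<exists>x. x \<in> F (Suc i) - F i" using F[of i "Suc i" for i] by blast
  then obtain d where d: "\<And>i. d i \<in> F (Suc i) - F i" by metis
  have "d i \<in> F j \<longleftrightarrow> i < j" for i j
  proof
    assume "d i \<in> F j"
    then show "i < j" using d[of i] mono[of j i] by (cases "j \<le> i") auto
  next
    assume "i < j"
    then show "d i \<in> F j" using d[of i] mono[of "Suc i" j] by auto
  qed
  with d show ?thesis using that by blast
qed

definition uniformly_growing :: "(nat \<Rightarrow> 'a multiset) \<Rightarrow> 'a set \<Rightarrow> bool" where
  "uniformly_growing X S \<longleftrightarrow> (\<forall>i j. i < j \<longrightarrow> X i \<subseteq># X j \<and> set_mset (X j - X i) = S)"

lemma uniformly_growing_comp: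
  assumes "uniformly_growing X S" and "strict_mono r"
  shows "uniformly_growing (X \<circ> r) S"
  using assms by (simp add: uniformly_growing_def strict_mono_less)

lemma uniformly_growing_subseq:
  fixes X :: "nat \<Rightarrow> 'a multiset"
  assumes B: "finite B" and XB: "\<And>i. set_mset (X i) \<subseteq> B"
  obtains r S where "strict_mono r" "uniformly_growing (X \<circ> r) S"
proof -
  define g where "g i j = ({x\<in>B. count (X i) x \<le> count (X j) x}, {x\<in>B. count (X i) x < count (X j) x})"
    for i j
  obtain r :: "nat \<Rightarrow> nat" and c where r: "strict_mono r"
    and hom_c: "\<And>i j. i < j \<Longrightarrow> g (r i) (r j) = c"
  proof (rule ramsey_pairs_subseq[of "Pow B \<times> Pow B" g])
    show "finite (Pow B \<times> Pow B)" using B by simp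
    show "g i j \<in> Pow B \<times> Pow B" if "i < j" for i j by (auto simp: g_def)
  qed (rule that)
  obtain L S where c: "c = (L, S)" by (rule prod.exhaust)
  have L_eq: "{x\<in>B. count (X (r i)) x \<le> count (X (r j)) x} = L"
    and S_eq: "{x\<in>B. count (X (r i)) x < count (X (r j)) x} = S" if "i < j" for i j
    using hom_c[OF that] unfolding c g_def by simp_all
  have B_L: "B \<subseteq> L"
  proof
    fix x assume "x \<in> B"
    show "x \<in> L"
    proof (rule ccontr)
      assume "x \<notin> L"
      have "count (X (r j)) x < count (X (r i)) x" if "i < j" for i j
      proof -
        have "x \<notin> {y\<in>B. count (X (r i)) y \<le> count (X (r j)) y}"
          using L_eq[OF that] \<open>x \<notin> L\<close> by simp
        with \<open>x \<in> B\<close> show ?thesis by simp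
      qed
      then show False by (rule no_strictly_decreasing_nat_seq)
    qed
  qed
  have count_le: "count (X (r i)) x \<le> count (X (r j)) x" if "i < j" for i j x
  proof (cases "x \<in> B")
    case True
    then show ?thesis using L_eq[OF that] B_L by blast
  next
    case False
    then have "x \<notin># X (r i)" using XB[of "r i"] by blast
    then show ?thesis by (simp add: not_in_iff)
  qed
  have "uniformly_growing (X \<circ> r) S"
    unfolding uniformly_growing_def
  proof (intro allI impI conjI)
    fix i j :: nat assume "i < j"
    show "(X \<circ> r) i \<subseteq># (X \<circ> r) j" using count_le[OF \<open>i < j\<close>] by (simp add: subseteq_mset_def)
    have "set_mset (X (r j) - X (r i)) = {x. count (X (r i)) x < count (X (r j)) x}"
      by (auto simp: in_diff_count)
    also have "\<dots> = {x\<in>B. count (X (r i)) x < count (X (r j)) x}"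
    proof -
      have "x \<in> B" if "count (X (r i)) x < count (X (r j)) x" for x
      proof -
        from that have "0 < count (X (r j)) x" by linarith
        then have "x \<in># X (r j)" by simp
        then show ?thesis using XB[of "r j"] by blast
      qed
      then show ?thesis by blast
    qed
    also have "\<dots> = S" by (rule S_eq[OF \<open>i < j\<close>])
    finally show "set_mset ((X \<circ> r) j - (X \<circ> r) i) = S" by simp
  qed
  with r show ?thesis using that by blast
qed

locale linear_omega_residuated =
  fixes mult :: "'a::order \<Rightarrow> 'a \<Rightarrow> 'a" and imp :: "'a \<Rightarrow> 'a \<Rightarrow> 'a" and e :: 'a
  assumes assoc: "mult (mult x y) z = mult x (mult y z)"
    and comm: "mult x y = mult y x"
    and unit_left: "mult e x = x"
    and residuation: "mult x y \<le> z \<longleftrightarrow> y \<le> imp x z"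
    and omega: "imp x e = imp (mult x x) e"
    and linear: "x \<le> y \<or> y \<le> x"
begin

lemma unit_right: "mult x e = x"
  by (simp add: comm[of x e] unit_left)

sublocale mprod: comm_monoid_mset mult e
  by unfold_locales (fact assoc comm unit_right)+

abbreviation mprod :: "'a multiset \<Rightarrow> 'a" where
  "mprod \<equiv> mprod.F"

lemma mult_mono_right:
  assumes "x \<le> y"
  shows "mult z x \<le> mult z y"
  using assms residuation[of z y "mult z y"] residuation[of z x "mult z y"] by auto

lemma mult_square_le_unit_iff: "mult (mult x x) y \<le> e \<longleftrightarrow> mult x y \<le> e"
  using residuation[of x y e] residuation[of "mult x x" y e] omega[of x] by simp

lemma mult_mprod_le_unit_iff_duplicate:
  assumes "x \<in># X"
  shows "mult (mprod (add_mset x X)) y \<le> e \<longleftrightarrow> mult (mprod X) y \<le> e"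
proof -
  obtain R where X: "X = add_mset x R" using assms by (metis multi_member_split)
  have "mult (mprod (add_mset x X)) y = mult (mult x x) (mult (mprod R) y)"
    and "mult (mprod X) y = mult x (mult (mprod R) y)"
    by (simp_all add: X assoc)
  then show ?thesis by (simp add: mult_square_le_unit_iff)
qed

lemma mult_mprod_le_unit_iff_remdups:
  "mult (mprod X) y \<le> e \<longleftrightarrow> mult (mprod (mset_set (set_mset X))) y \<le> e"
proof (induction X arbitrary: y)
  case empty
  then show ?case by simp
next
  case (add x X)
  show ?case
  proof (cases "x \<in># X")
    case True
    have "mult (mprod (add_mset x X)) y \<le> e \<longleftrightarrow> mult (mprod X) y \<le> e"
      by (rule mult_mprod_le_unit_iff_duplicate[OF True])
    also have "\<dots> \<longleftrightarrow> mult (mprod (mset_set (set_mset X))) y \<le> e"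
      by (rule add.IH)
    also have "set_mset X = set_mset (add_mset x X)"
      using True by auto
    finally show ?thesis .
  next
    case False
    have "mult (mprod (add_mset x X)) y \<le> e \<longleftrightarrow> mult (mprod X) (mult x y) \<le> e"
      by (simp add: mprod.assoc mprod.left_commute)
    also have "\<dots> \<longleftrightarrow> mult (mprod (mset_set (set_mset X))) (mult x y) \<le> e"
      by (rule add.IH)
    also have "\<dots> \<longleftrightarrow> mult (mprod (mset_set (set_mset (add_mset x X)))) y \<le> e"
      using False by (simp add: mprod.assoc mprod.left_commute)
    finally show ?thesis .
  qed
qed

lemma mprod_le_unit_iff_same_support:
  assumes "set_mset X = set_mset Y"
  shows "mprod X \<le> e \<longleftrightarrow> mprod Y \<le> e"
  using assms mult_mprod_le_unit_iff_remdups[of X e] mult_mprod_le_unit_iff_remdups[of Y e]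
  by (simp add: unit_right)

lemma mult_mprod_le_of_same_support:
  assumes "set_mset R = set_mset S"
    and "u \<le> b" and "\<not> mult u (mprod R) \<le> b" and "mult w (mprod S) \<le> b"
  shows "w \<le> b"
proof -
  have "\<not> mprod R \<le> e"
  proof
    assume "mprod R \<le> e"
    then have "mult u (mprod R) \<le> u" using mult_mono_right[of "mprod R" e u] by (simp add: unit_right)
    with assms(2,3) show False by (meson order_trans)
  qed
  then have "\<not> mprod S \<le> e" using mprod_le_unit_iff_same_support[OF assms(1)] by simp
  then have "e \<le> mprod S" using linear by blast
  then have "w \<le> mult w (mprod S)" using mult_mono_right[of e "mprod S" w] by (simp add: unit_right)
  then show ?thesis using assms(4) by (rule order_trans)
qed

lemma gen_monoid_eq_mprod: "gen_monoid mult e B = {mprod X | X. set_mset X \<subseteq> B}"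
proof (intro equalityI subsetI)
  fix a assume "a \<in> gen_monoid mult e B"
  then show "a \<in> {mprod X | X. set_mset X \<subseteq> B}"
  proof induction
    case unit
    show ?case by (intro CollectI exI[of _ "{#}"]) simp
  next
    case (gen b)
    then show ?case by (intro CollectI exI[of _ "{#b#}"]) simp
  next
    case (mult a c)
    then obtain X Y where "a = mprod X" "set_mset X \<subseteq> B" "c = mprod Y" "set_mset Y \<subseteq> B"
      by blast
    then show ?case by (intro CollectI exI[of _ "X + Y"]) simp
  qed
next
  fix a assume "a \<in> {mprod X | X. set_mset X \<subseteq> B}"
  then obtain X where "a = mprod X" "set_mset X \<subseteq> B" by blast
  moreover have "set_mset X \<subseteq> B \<Longrightarrow> mprod X \<in> gen_monoid mult e B"
    by (induction X) (simp_all add: gen_monoid.unit gen_monoid.gen gen_monoid.mult)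
  ultimately show "a \<in> gen_monoid mult e B" by simp
qed

lemma res_set_chain:
  "res_set mult e B a b \<subseteq> res_set mult e B a' b \<or> res_set mult e B a' b \<subseteq> res_set mult e B a b"
proof (rule ccontr)
  assume "\<not> ?thesis"
  then obtain c c' where c: "mult a c \<le> b" "\<not> mult a' c \<le> b"
    and c': "mult a' c' \<le> b" "\<not> mult a c' \<le> b"
    unfolding res_set_def subset_iff by auto
  from linear[of c c'] show False
  proof
    assume "c \<le> c'"
    then have "mult a' c \<le> mult a' c'" by (rule mult_mono_right)
    then have "mult a' c \<le> b" using c'(1) by (rule order_trans)
    with c(2) show False by contradiction
  next
    assume "c' \<le> c"
    then have "mult a c' \<le> mult a c" by (rule mult_mono_right)
    then have "mult a c' \<le> b" using c(1) by (rule order_trans)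
    with c'(2) show False by contradiction
  qed
qed

lemma uniformly_growing_mprod_threshold:
  assumes X: "uniformly_growing X S" and Y: "uniformly_growing Y T"
    and "j1 < j2" "i1 < i2" "j1' < j2'" "i1' < i2'"
    and "mprod (X j1 + Y i1) \<le> b" "\<not> mprod (X j2 + Y i2) \<le> b"
    and "mprod (X j2' + Y i2') \<le> b"
  shows "mprod (X j1' + Y i1') \<le> b"
proof -
  have growth: "X j \<subseteq># X j'" "Y i \<subseteq># Y i'"
      "set_mset (X j' - X j) = S" "set_mset (Y i' - Y i) = T"
    if "j < j'" "i < i'" for j j' i i'
    using X Y that unfolding uniformly_growing_def by blast+
  define incr where "incr j j' i i' = (X j' - X j) + (Y i' - Y i)" for j j' i i'
  have mprod_step: "mprod (X j' + Y i') = mult (mprod (X j + Y i)) (mprod (incr j j' i i'))"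
    if "j < j'" "i < i'" for j j' i i'
  proof -
    have "X j' + Y i' = (X j + (X j' - X j)) + (Y i + (Y i' - Y i))"
      using growth[OF that] by (simp add: subset_mset.add_diff_inverse)
    also have "\<dots> = (X j + Y i) + incr j j' i i'"
      by (simp add: incr_def union_ac)
    finally show ?thesis by simp
  qed
  have incr_support: "set_mset (incr j j' i i') = S \<union> T" if "j < j'" "i < i'" for j j' i i'
    by (simp only: incr_def set_mset_union growth(3,4)[OF that])
  show ?thesis
  proof (rule mult_mprod_le_of_same_support)
    show "set_mset (incr j1 j2 i1 i2) = set_mset (incr j1' j2' i1' i2')"
      using incr_support assms(3-6) by simp
    show "\<not> mult (mprod (X j1 + Y i1)) (mprod (incr j1 j2 i1 i2)) \<le> b"
      using assms(8) mprod_step[OF assms(3,4)] by simp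
    show "mult (mprod (X j1' + Y i1')) (mprod (incr j1' j2' i1' i2')) \<le> b"
      using assms(9) mprod_step[OF assms(5,6)] by simp
  qed (rule assms(7))
qed

lemma no_switching_residuation_pattern:
  fixes a d :: "nat \<Rightarrow> 'a"
  assumes B: "finite B"
    and a: "\<And>i. a i \<in> gen_monoid mult e B" and d: "\<And>i. d i \<in> gen_monoid mult e B"
    and pattern: "\<And>i j. mult (a j) (d i) \<le> b \<longleftrightarrow> (i < j \<longleftrightarrow> c)"
  shows False
proof -
  have "\<forall>i. \<exists>X. a i = mprod X \<and> set_mset X \<subseteq> B"
    using a unfolding gen_monoid_eq_mprod by blast
  from choice[OF this] obtain X where X: "\<And>i. a i = mprod (X i)" "\<And>i. set_mset (X i) \<subseteq> B"
    by blast
  have "\<forall>i. \<exists>Y. d i = mprod Y \<and> set_mset Y \<subseteq> B"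
    using d unfolding gen_monoid_eq_mprod by blast
  from choice[OF this] obtain Y where Y: "\<And>i. d i = mprod (Y i)" "\<And>i. set_mset (Y i) \<subseteq> B"
    by blast
  obtain r :: "nat \<Rightarrow> nat" and S where r: "strict_mono r" and Xr: "uniformly_growing (X \<circ> r) S"
    by (rule uniformly_growing_subseq[OF B X(2)]) (rule that)
  have "set_mset ((Y \<circ> r) i) \<subseteq> B" for i
    using Y(2) by simp
  then obtain r' :: "nat \<Rightarrow> nat" and T where r': "strict_mono r'"
    and Yt: "uniformly_growing (Y \<circ> r \<circ> r') T"
    by (rule uniformly_growing_subseq[OF B]) (rule that)
  define t where "t = r \<circ> r'"
  have t: "strict_mono t"
    using r r' unfolding t_def strict_mono_def by simp
  have Xt: "uniformly_growing (X \<circ> t) S"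
    using uniformly_growing_comp[OF Xr r'] by (simp add: t_def comp_assoc)
  from Yt have Yt: "uniformly_growing (Y \<circ> t) T"
    by (simp add: t_def comp_assoc)
  have Q: "mprod ((X \<circ> t) j + (Y \<circ> t) i) \<le> b \<longleftrightarrow> (i < j \<longleftrightarrow> c)" for i j
    using pattern[where i = "t i" and j = "t j"] t by (simp add: X(1) Y(1) strict_mono_less)
  show False
  proof (cases c)
    case True
    then show False
      using uniformly_growing_mprod_threshold[OF Xt Yt, of 1 2 0 2 0 2 0 1 b] Q by simp
  next
    case False
    then show False
      using uniformly_growing_mprod_threshold[OF Xt Yt, of 0 2 0 1 1 2 0 2 b] Q by simp
  qed
qed

lemma finite_res_sets:
  assumes B: "finite B"
  shows "finite ((\<lambda>a. res_set mult e B a b) ` gen_monoid mult e B)"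
proof (rule ccontr)
  define M where "M = gen_monoid mult e B"
  define R where "R a = res_set mult e B a b" for a
  have R_M: "R a \<subseteq> M" for a
    by (auto simp: R_def M_def res_set_def)
  assume "infinite ((\<lambda>a. res_set mult e B a b) ` gen_monoid mult e B)"
  then obtain f :: "nat \<Rightarrow> 'a set" where f: "inj f" "range f \<subseteq> R ` M"
    unfolding infinite_iff_countable_subset R_def M_def by blast
  then have "\<forall>i. \<exists>a. a \<in> M \<and> f i = R a" by blast
  from choice[OF this] obtain s where s: "\<And>i. s i \<in> M" "\<And>i. f i = R (s i)"
    by blast
  obtain r :: "nat \<Rightarrow> nat" and c where r: "strict_mono r"
    and hom: "\<And>i j. i < j \<Longrightarrow> (R (s (r i)) \<subseteq> R (s (r j))) = c"
    by (rule ramsey_pairs_subseq[of UNIV "\<lambda>i j. R (s i) \<subseteq> R (s j)"]) (simp_all add: that)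
  define a where "a = s \<circ> r"
  have aM: "a i \<in> M" for i
    by (simp add: a_def s(1))
  have distinct: "R (a i) \<noteq> R (a j)" if "i < j" for i j
  proof
    assume "R (a i) = R (a j)"
    then have "f (r i) = f (r j)" by (simp add: a_def s(2))
    then have "r i = r j" using f(1) by (simp add: inj_eq)
    with r that show False by (simp add: strict_mono_eq)
  qed
  obtain d where dM: "\<And>i. d i \<in> M" and dR: "\<And>i j. d i \<in> R (a j) \<longleftrightarrow> (i < j \<longleftrightarrow> c)"
  proof (cases c)
    case True
    have chain: "R (a i) \<subset> R (a j)" if "i < j" for i j
      using hom[OF that] distinct[OF that] True by (simp add: a_def psubset_eq)
    obtain d where d1: "\<And>i. d i \<in> R (a (Suc i)) - R (a i)"
      and d2: "\<And>i j. d i \<in> R (a j) \<longleftrightarrow> i < j"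
    proof (rule strict_chain_separating_seq[of "\<lambda>i. R (a i)"])
      show "R (a i) \<subset> R (a j)" if "i < j" for i j using chain[OF that] .
    qed (rule that)
    show thesis
    proof (rule that)
      show "d i \<in> M" for i using d1[of i] R_M by blast
      show "d i \<in> R (a j) \<longleftrightarrow> (i < j \<longleftrightarrow> c)" for i j using d2[of i j] True by simp
    qed
  next
    case False
    have chain: "- R (a i) \<subset> - R (a j)" if "i < j" for i j
    proof -
      have "\<not> R (a i) \<subseteq> R (a j)" using hom[OF that] False by (simp add: a_def)
      then have "R (a j) \<subset> R (a i)" using res_set_chain[of B "a j" b "a i"] by (auto simp: R_def)
      then show ?thesis by blast
    qed
    obtain d where d1: "\<And>i. d i \<in> - R (a (Suc i)) - - R (a i)"
      and d2: "\<And>i j. d i \<in> - R (a j) \<longleftrightarrow> i < j"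
    proof (rule strict_chain_separating_seq[of "\<lambda>i. - R (a i)"])
      show "- R (a i) \<subset> - R (a j)" if "i < j" for i j using chain[OF that] .
    qed (rule that)
    show thesis
    proof (rule that)
      show "d i \<in> M" for i using d1[of i] R_M by blast
      show "d i \<in> R (a j) \<longleftrightarrow> (i < j \<longleftrightarrow> c)" for i j using d2[of i j] False by blast
    qed
  qed
  have "mult (a j) (d i) \<le> b \<longleftrightarrow> (i < j \<longleftrightarrow> c)" for i j
    using dR[of i j] dM[of i] by (simp add: R_def M_def res_set_def)
  with B aM dM show False unfolding M_def by (rule no_switching_residuation_pattern)
qed

lemma finite_Dbar:
  assumes "finite B"
  shows "finite (Dbar mult e B)"
proof (rule finite_subset)
  show "Dbar mult e B \<subseteq> (\<Union>b\<in>B. (\<lambda>a. res_set mult e B a b) ` gen_monoid mult e B)"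
    by (auto simp: Dbar_def)
  show "finite (\<Union>b\<in>B. (\<lambda>a. res_set mult e B a b) ` gen_monoid mult e B)"
    using assms finite_res_sets[OF assms] by blast
qed

lemma finite_Dset:
  assumes "finite B"
  shows "finite (Dset mult e B)"
proof (rule finite_subset)
  show "Dset mult e B \<subseteq> (\<lambda>\<chi>. gen_monoid mult e B \<inter> \<Inter>\<chi>) ` Pow (Dbar mult e B)"
    by (auto simp: Dset_def)
  show "finite ((\<lambda>\<chi>. gen_monoid mult e B \<inter> \<Inter>\<chi>) ` Pow (Dbar mult e B))"
    using finite_Dbar[OF assms] by simp
qed

end

lemma UL_omega_algebra_linear_omega_residuated:
  fixes mult imp :: "'a::bounded_lattice \<Rightarrow> 'a \<Rightarrow> 'a" and e f :: 'a
  assumes "UL_omega_algebra mult imp e f" and "\<forall>x y::'a. x \<le> y \<or> y \<le> x"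
  shows "linear_omega_residuated mult imp e"
  using assms unfolding UL_omega_algebra_def UL_algebra_def
  by unfold_locales blast+

theorem lemma4p8:
  fixes mult imp :: "'a::bounded_lattice \<Rightarrow> 'a \<Rightarrow> 'a"
    and e f :: 'a and B :: "'a set"
  assumes "UL_omega_algebra mult imp e f"
    and "\<forall>x y::'a. x \<le> y \<or> y \<le> x"
    and "finite B"
    and "{e, f, bot, top} \<subseteq> B"
  shows "finite (Dset mult e B)"
proof -
  interpret linear_omega_residuated mult imp e
    using assms(1,2) by (rule UL_omega_algebra_linear_omega_residuated)
  show ?thesis using assms(3) by (rule finite_Dset)
qed

end
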